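(* Let $n,k$ be positive integers such that $s^{n,k}=\frac{n(n+1)}{2k}$ is an integer, and let $\mathcal P=[p_1,\dots,p_k]$ be an ascending partition of $n$ of size $k$ of the form $\mathcal P=[2^e,p^f,\ldots]$ with $e,f>0$ and $p\ge 3$; that is, $p_1=\cdots=p_e=2$, $p_{e+1}=\cdots=p_{e+f}=p$, and $p_i>p$ for all $i>e+f$. Let $c=s^{n,k}-n$, $C=\{x\in[n]: x\ge c\}$ and $h=|C|-2e=2n-s^{n,k}+1-2e$. Suppose that $f>h$ and \[ \sum_{i=c-p(f-h)}^{c-1} i < (f-h)\,s^{n,k}. \] Then $\mathcal P$ is non-equitable.
   Context: $[n]=\{1,2,\ldots,n\}$. An ascending partition of $n$ of size $k$ is a sequence of positive integers $[p_1,\ldots,p_k]$ with $p_1\le\cdots\le p_k$ and $\sum_i p_i=n$. Such a partition is equitable if $[n]$ can be partitioned into sets $A_1,\dots,A_k$ with $|A_i|=p_i$ such that all the sums $\sum_{x\in A_i}x$ are equal (necessarily to $s^{n,k}$). The notation $[q_1^{e_1},q_2^{e_2},\ldots]$ with $q_1<q_2<\cdots$ means the ascending partition having exactly $e_i$ parts equal to $q_i$. *)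

theory Defs
  imports Main
begin

text \<open>An ascending partition of n of size k, as a list [p_1,...,p_k] (0-indexed in Isabelle).\<close>
definition ascending_partition :: "nat \<Rightarrow> nat \<Rightarrow> nat list \<Rightarrow> bool" where
  "ascending_partition n k P \<longleftrightarrow>
     length P = k \<and> sorted P \<and> (\<forall>x\<in>set P. 0 < x) \<and> sum_list P = n"

definition equitable :: "nat \<Rightarrow> nat list \<Rightarrow> bool" where
  "equitable n P \<longleftrightarrow>
     (\<exists>A :: nat \<Rightarrow> nat set.
        (\<Union>i<length P. A i) = {1..n} \<and>
        (\<forall>i<length P. \<forall>j<length P. i \<noteq> j \<longrightarrow> A i \<inter> A j = {}) \<and>
        (\<forall>i<length P. card (A i) = P ! i) \<and>
        (\<forall>i<length P. \<forall>j<length P. \<Sum>(A i) = \<Sum>(A j)))"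

end

theory Submission
  imports Defs "HOL-Library.Disjoint_Sets"
begin

text \<open>
  In an equitable partition every block sums to \<open>s\<close>. A block \<open>{a, b}\<close> of size 2 has
  \<open>a = s - b \<ge> s - n = c\<close>, so the \<open>e\<close> pairs use up \<open>2e\<close> elements of \<open>C\<close>. The remaining
  \<open>h\<close> elements of \<open>C\<close> meet at most \<open>h\<close> of the \<open>f\<close> blocks of size \<open>p\<close>, so at least
  \<open>f - h\<close> of these blocks lie entirely below \<open>c\<close>. Their union consists of \<open>p(f - h)\<close>
  distinct integers smaller than \<open>c\<close> with total \<open>(f - h) s\<close>, which is impossible when even
  the \<open>p(f - h)\<close> largest integers below \<open>c\<close> sum to less than that.
\<close>

lemma sum_le_sum_interval_top:
  fixes S :: "int set"
  assumes "finite S" and "\<forall>x\<in>S. x \<le> b"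
  shows "\<Sum>S \<le> \<Sum>{b - int (card S) + 1 .. b}"
  using assms
proof (induction "card S" arbitrary: S b)
  case 0
  then show ?case by simp
next
  case (Suc m)
  define M where "M = Max S"
  have "S \<noteq> {}" using Suc.hyps(2) by auto
  then have "M \<in> S" and M_le: "M \<le> b" using Suc.prems M_def by auto
  have card_rest: "m = card (S - {M})" using Suc.hyps(2) \<open>M \<in> S\<close> by simp
  have below: "\<forall>x\<in>S - {M}. x \<le> b - 1"
  proof
    fix x assume "x \<in> S - {M}"
    then have "x < M" using Max_ge[OF Suc.prems(1)] M_def by fastforce
    then show "x \<le> b - 1" using M_le by simp
  qed
  have IH: "\<Sum>(S - {M}) \<le> \<Sum>{b - 1 - int m + 1 .. b - 1}"
    using Suc.hyps(1)[OF card_rest _ below] Suc.prems(1) card_rest by simp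
  have "{b - int (card S) + 1 .. b} = insert b {b - 1 - int m + 1 .. b - 1}"
    using Suc.hyps(2) by auto
  then have "\<Sum>{b - int (card S) + 1 .. b} = b + \<Sum>{b - 1 - int m + 1 .. b - 1}"
    by simp
  moreover have "\<Sum>S = M + \<Sum>(S - {M})"
    using Suc.prems(1) \<open>M \<in> S\<close> by (simp add: sum.remove)
  ultimately show ?case using IH M_le by linarith
qed

lemma sum_blocks_below_le:
  fixes A :: "'i \<Rightarrow> nat set" and s c :: int
  assumes "finite K" and "m \<le> card K" and "disjoint_family_on A K"
    and "\<And>i. i \<in> K \<Longrightarrow> card (A i) = p"
    and "\<And>i. i \<in> K \<Longrightarrow> int (\<Sum>(A i)) = s"
    and below: "\<And>i x. i \<in> K \<Longrightarrow> x \<in> A i \<Longrightarrow> int x < c"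
  shows "int m * s \<le> \<Sum>{c - int p * int m .. c - 1}"
proof -
  obtain I where "I \<subseteq> K" and card_I: "card I = m"
    using obtain_subset_with_card_n[OF assms(2)] by blast
  then have "finite I" and disj: "disjoint_family_on A I"
    using assms(1,3) finite_subset disjoint_family_on_mono by blast+
  define U where "U = (\<Union>i\<in>I. A i)"
  have fin: "finite (A i)" if "i \<in> I" for i
  proof (rule finite_subset)
    show "A i \<subseteq> {..<nat c}"
      using below \<open>I \<subseteq> K\<close> that by (auto simp: zless_nat_eq_int_zless)
  qed simp
  then have "finite U" using \<open>finite I\<close> U_def by simp
  have inj: "inj_on int U" by (simp add: inj_on_def)
  have "card U = m * p"
    using card_UN_disjoint'[OF disj fin \<open>finite I\<close>] assms(4) \<open>I \<subseteq> K\<close> card_I U_def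
    by (simp add: subset_iff)
  then have card_image: "card (int ` U) = p * m" using card_image[OF inj] by simp
  have "int (\<Sum>U) = (\<Sum>i\<in>I. int (\<Sum>(A i)))"
    using sum.UNION_disjoint_family[OF \<open>finite I\<close> _ disj] fin U_def by simp
  also have "\<dots> = int m * s" using assms(5) \<open>I \<subseteq> K\<close> card_I by (simp add: subset_iff)
  finally have "\<Sum>(int ` U) = int m * s" using sum.reindex[OF inj, of id] by simp
  moreover have "\<forall>x\<in>int ` U. x \<le> c - 1" using below \<open>I \<subseteq> K\<close> U_def by fastforce
  ultimately show ?thesis
    using sum_le_sum_interval_top[of "int ` U" "c - 1"] \<open>finite U\<close> card_image by simp
qed

lemma card_blocks_avoiding_ge:
  assumes "finite C" and "finite E" and "finite J"
    and "disjoint_family_on A (E \<union> J)" and "E \<inter> J = {}"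
    and "\<And>i. i \<in> E \<Longrightarrow> A i \<subseteq> C"
  shows "card J + (\<Sum>i\<in>E. card (A i)) \<le> card {i \<in> J. A i \<inter> C = {}} + card C"
proof -
  define D where "D = (\<Union>i\<in>E. A i)"
  define J_meet where "J_meet = {i \<in> J. A i \<inter> C \<noteq> {}}"
  have "D \<subseteq> C" unfolding D_def using assms(6) by blast
  have "disjoint_family_on A E" by (rule disjoint_family_on_mono[OF _ assms(4)]) blast
  moreover have "\<And>i. i \<in> E \<Longrightarrow> finite (A i)" using assms(1,6) finite_subset by blast
  ultimately have card_D: "card D = (\<Sum>i\<in>E. card (A i))"
    unfolding D_def using assms(2) by (rule card_UN_disjoint')
  have "\<forall>i\<in>J_meet. \<exists>x. x \<in> A i \<inter> C" unfolding J_meet_def by blast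
  then obtain g where g: "\<And>i. i \<in> J_meet \<Longrightarrow> g i \<in> A i \<inter> C"
    using bchoice[of J_meet "\<lambda>i x. x \<in> A i \<inter> C"] by blast
  have disjoint: "A i \<inter> A j = {}" if "i \<in> J_meet" and "j \<in> E \<union> J" and "i \<noteq> j" for i j
    using disjoint_family_onD[OF assms(4)] that J_meet_def by blast
  have "inj_on g J_meet"
  proof (rule inj_onI)
    fix i j assume "i \<in> J_meet" "j \<in> J_meet" "g i = g j"
    show "i = j"
    proof (rule ccontr)
      assume "i \<noteq> j"
      moreover have "j \<in> E \<union> J" using \<open>j \<in> J_meet\<close> J_meet_def by simp
      ultimately have "A i \<inter> A j = {}" using disjoint \<open>i \<in> J_meet\<close> by blast
      moreover have "g i \<in> A i \<inter> A j"
        using g[OF \<open>i \<in> J_meet\<close>] g[OF \<open>j \<in> J_meet\<close>] \<open>g i = g j\<close> by simp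
      ultimately show False by blast
    qed
  qed
  moreover have "g ` J_meet \<subseteq> C - D"
  proof
    fix y assume "y \<in> g ` J_meet"
    then obtain i where "i \<in> J_meet" and y: "y = g i" by blast
    moreover have "i \<notin> E" using \<open>i \<in> J_meet\<close> assms(5) J_meet_def by blast
    ultimately show "y \<in> C - D" using g[of i] disjoint[of i] D_def by blast
  qed
  ultimately have "card J_meet \<le> card (C - D)"
    using assms(1) by (meson card_inj_on_le finite_Diff)
  moreover have "card (C - D) + card D = card C"
    using card_Diff_subset[OF finite_subset[OF \<open>D \<subseteq> C\<close> assms(1)] \<open>D \<subseteq> C\<close>]
      card_mono[OF assms(1) \<open>D \<subseteq> C\<close>] by linarith
  moreover have "card J = card J_meet + card {i \<in> J. A i \<inter> C = {}}"
  proof -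
    have "card J = card (J_meet \<union> {i \<in> J. A i \<inter> C = {}})"
      by (rule arg_cong[where f = card]) (auto simp: J_meet_def)
    also have "\<dots> = card J_meet + card {i \<in> J. A i \<inter> C = {}}"
      by (rule card_Un_disjoint) (use assms(3) in \<open>auto simp: J_meet_def\<close>)
    finally show ?thesis .
  qed
  ultimately show ?thesis using card_D by linarith
qed

lemma two_element_block_bounded_below:
  assumes "card B = 2" and "B \<subseteq> {1..n}" and "\<Sum>B = s"
  shows "B \<subseteq> {x \<in> {1..n}. int s - int n \<le> int x}"
proof -
  obtain a b where "a \<noteq> b" and B: "B = {a, b}" using assms(1) by (auto simp: card_2_iff)
  then have "a + b = s" using assms(3) by simp
  then show ?thesis using assms(2) B by auto
qed

lemma equitable_obtain_blocks:
  assumes "equitable n P" and "P \<noteq> []"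
  obtains A where "disjoint_family_on A {..<length P}"
    and "\<And>i. i < length P \<Longrightarrow> A i \<subseteq> {1..n}"
    and "\<And>i. i < length P \<Longrightarrow> card (A i) = P ! i"
    and "\<And>i. i < length P \<Longrightarrow> \<Sum>(A i) = n * (n + 1) div (2 * length P)"
proof -
  obtain A where union: "(\<Union>i<length P. A i) = {1..n}"
    and disjoint: "\<forall>i<length P. \<forall>j<length P. i \<noteq> j \<longrightarrow> A i \<inter> A j = {}"
    and card: "\<forall>i<length P. card (A i) = P ! i"
    and same_sum: "\<forall>i<length P. \<forall>j<length P. \<Sum>(A i) = \<Sum>(A j)"
    using assms(1) unfolding equitable_def by blast
  have disj: "disjoint_family_on A {..<length P}"
    using disjoint unfolding disjoint_family_on_def by blast
  have sub: "A i \<subseteq> {1..n}" if "i < length P" for i using union that by blast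
  have "\<Sum>(A i) = n * (n + 1) div (2 * length P)" if "i < length P" for i
  proof -
    have "\<Sum>{1..n} = (\<Sum>j<length P. \<Sum>(A j))"
      unfolding union[symmetric]
      using disj sub by (intro sum.UNION_disjoint_family) (auto intro: finite_subset)
    also have "\<dots> = (\<Sum>j<length P. \<Sum>(A i))"
      by (rule sum.cong[OF refl]) (metis lessThan_iff same_sum that)
    also have "\<dots> = length P * \<Sum>(A i)" by simp
    finally have "n * (n + 1) = 2 * length P * \<Sum>(A i)"
      using double_gauss_sum_from_Suc_0[of n, where 'a = nat] by simp
    then show ?thesis using assms(2) by simp
  qed
  with disj sub card show ?thesis using that by blast
qed

theorem mainTheorem1:
  fixes n k e f p :: nat and P :: "nat list" and s c h :: int and C :: "nat set"
  assumes "0 < n" and "0 < k"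
    and "(2 * k) dvd (n * (n + 1))"
    and "s = int (n * (n + 1) div (2 * k))"
    and "ascending_partition n k P"
    and "0 < e" and "0 < f" and "3 \<le> p" and "e + f \<le> k"
    and "\<forall>i<e. P ! i = 2"
    and "\<forall>i. e \<le> i \<and> i < e + f \<longrightarrow> P ! i = p"
    and "\<forall>i. e + f \<le> i \<and> i < k \<longrightarrow> P ! i > p"
    and "c = s - int n"
    and "C = {x \<in> {1..n}. int x \<ge> c}"
    and "h = int (card C) - 2 * int e"
    and "int f > h"
    and "(\<Sum>i\<in>{c - int p * (int f - h) .. c - 1}. i) < (int f - h) * s"
  shows "\<not> equitable n P"
proof
  assume "equitable n P"
  have len: "length P = k" using assms(5) unfolding ascending_partition_def by simp
  with assms(2) have "P \<noteq> []" by auto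
  obtain A where disj: "disjoint_family_on A {..<k}"
    and sub: "\<And>i. i < k \<Longrightarrow> A i \<subseteq> {1..n}"
    and sizes: "\<And>i. i < k \<Longrightarrow> card (A i) = P ! i"
    and sums: "\<And>i. i < k \<Longrightarrow> \<Sum>(A i) = n * (n + 1) div (2 * k)"
    by (rule equitable_obtain_blocks[OF \<open>equitable n P\<close> \<open>P \<noteq> []\<close>, unfolded len]) (rule that)
  have block_sum: "int (\<Sum>(A i)) = s" if "i < k" for i
    using sums[OF that] assms(4) by simp
  have pairs: "A i \<subseteq> C" if "i < e" for i
  proof -
    have "i < k" using that assms(9) by simp
    then have "A i \<subseteq> {x \<in> {1..n}. int (\<Sum>(A i)) - int n \<le> int x}"
      using sizes sub assms(10) that by (intro two_element_block_bounded_below) auto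
    then show ?thesis using block_sum[OF \<open>i < k\<close>] assms(13,14) by simp
  qed
  define K where "K = {i \<in> {e..<e + f}. A i \<inter> C = {}}"
  have K: "i < k" "P ! i = p" "A i \<inter> C = {}" if "i \<in> K" for i
    using that assms(9,11) by (auto simp: K_def)
  have "card {e..<e + f} + (\<Sum>i<e. card (A i)) \<le> card K + card C"
    unfolding K_def using pairs assms(9,14)
    by (intro card_blocks_avoiding_ge disjoint_family_on_mono[OF _ disj]) auto
  moreover have "(\<Sum>i<e. card (A i)) = (\<Sum>i<e. 2)"
    using sizes assms(9,10) by (intro sum.cong) auto
  ultimately have many_avoid: "nat (int f - h) \<le> card K" using assms(15) by simp
  have "int (nat (int f - h)) * s \<le> \<Sum>{c - int p * int (nat (int f - h)) .. c - 1}"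
  proof (rule sum_blocks_below_le)
    show "finite K" by (simp add: K_def)
    show "disjoint_family_on A K" by (rule disjoint_family_on_mono[OF _ disj]) (use K in auto)
    show "int x < c" if "i \<in> K" and "x \<in> A i" for i x
      using that K[OF \<open>i \<in> K\<close>] sub assms(14) by fastforce
  qed (use many_avoid K sizes block_sum in auto)
  then show False using assms(16,17) by simp
qed

end
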